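(* Fix integers $1\le k\le n$, a graph $G$ on $n$ vertices, and $\alpha\in\mathbb{R}$. Then $A^{\circ\alpha}$ is positive semidefinite for all $A\in\mathcal{C}_n^k([0,\infty))$ if and only if $A^{\circ\alpha}$ is positive semidefinite for all $A\in\mathcal{P}_n^k([0,\infty))$; and $A^{\circ\alpha}\in\mathcal{P}_G$ for all $A\in\mathcal{C}_G([0,\infty))$ if and only if $A^{\circ\alpha}\in\mathcal{P}_G$ for all $A\in\mathcal{P}_G([0,\infty))$. The analogous equivalences hold for $f=\phi_\alpha$ and $f=\psi_\alpha$ applied entrywise, with $\mathcal{C}_n^k(\mathbb{R})$, $\mathcal{P}_n^k(\mathbb{R})$, $\mathcal{C}_G(\mathbb{R})$, $\mathcal{P}_G(\mathbb{R})$ in place of the sets with entries in $[0,\infty)$.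
   Context: For $I\subset\mathbb{R}$, $\mathcal{P}_n(I)$ is the set of real symmetric PSD $n\times n$ matrices with entries in $I$, and $\mathcal{P}_n^k(I)$ those of rank at most $k$. For a graph $G$ on $\{1,\dots,n\}$, $\mathcal{P}_G(I)$ is the set of matrices in $\mathcal{P}_n(I)$ with $a_{ij}=0$ whenever $i\neq j$ and $(i,j)$ is not an edge; $\mathcal{P}_G=\mathcal{P}_G(\mathbb{R})$. A correlation matrix is a PSD matrix with all diagonal entries equal to $1$; $\mathcal{C}_n^k(I)$ and $\mathcal{C}_G(I)$ denote the sets of correlation matrices in $\mathcal{P}_n^k(I)$ and $\mathcal{P}_G(I)$ respectively. $A^{\circ\alpha}=(a_{ij}^\alpha)$ with $0^\alpha:=0$; $\psi_\alpha(x)=\mathrm{sgn}(x)|x|^\alpha$, $\phi_\alpha(x)=|x|^\alpha$ ($x\ne0$), $\psi_\alpha(0)=\phi_\alpha(0)=0$, applied entrywise. *)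

theory Defs
  imports "HOL-Analysis.Analysis"
begin

definition psd :: "real^'n^'n \<Rightarrow> bool" where
  "psd A \<longleftrightarrow> transpose A = A \<and> (\<forall>x. 0 \<le> x \<bullet> (A *v x))"

definition Pn :: "real set \<Rightarrow> (real^'n^'n) set" where
  "Pn I = {A. psd A \<and> (\<forall>i j. A $ i $ j \<in> I)}"

definition Pnk :: "nat \<Rightarrow> real set \<Rightarrow> (real^'n^'n) set" where
  "Pnk k I = {A \<in> Pn I. rank A \<le> k}"

definition PG :: "('n \<Rightarrow> 'n \<Rightarrow> bool) \<Rightarrow> real set \<Rightarrow> (real^'n^'n) set" where
  "PG G I = {A \<in> Pn I. \<forall>i j. i \<noteq> j \<and> \<not> G i j \<longrightarrow> A $ i $ j = 0}"

definition is_corr :: "real^'n^'n \<Rightarrow> bool" where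
  "is_corr A \<longleftrightarrow> psd A \<and> (\<forall>i. A $ i $ i = 1)"

definition Cnk :: "nat \<Rightarrow> real set \<Rightarrow> (real^'n^'n) set" where
  "Cnk k I = {A \<in> Pnk k I. is_corr A}"

definition CG :: "('n \<Rightarrow> 'n \<Rightarrow> bool) \<Rightarrow> real set \<Rightarrow> (real^'n^'n) set" where
  "CG G I = {A \<in> PG G I. is_corr A}"

definition entrywise :: "(real \<Rightarrow> real) \<Rightarrow> real^'n^'n \<Rightarrow> real^'n^'n" where
  "entrywise f A = (\<chi> i j. f (A $ i $ j))"

text \<open>x^alpha with 0^alpha := 0 (used for nonnegative x); A^{o alpha} = entrywise (pow0 alpha) A.\<close>
definition pow0 :: "real \<Rightarrow> real \<Rightarrow> real" where
  "pow0 \<alpha> x = (if x = 0 then 0 else x powr \<alpha>)"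

definition phi :: "real \<Rightarrow> real \<Rightarrow> real" where
  "phi \<alpha> x = (if x = 0 then 0 else \<bar>x\<bar> powr \<alpha>)"

definition psi :: "real \<Rightarrow> real \<Rightarrow> real" where
  "psi \<alpha> x = (if x = 0 then 0 else sgn x * \<bar>x\<bar> powr \<alpha>)"

end

theory Submission
  imports Defs
begin

text \<open>For a positive semidefinite A, a zero diagonal entry forces its row and column to vanish,
  so A = D C D with D the diagonal of square roots of the diagonal of A and C a correlation matrix
  (on the indices with positive diagonal). Entrywise maps f homogeneous of degree \<alpha> then satisfy
  f[A] = D^\<alpha> f[C] D^\<alpha>, a congruence of f[C]. The remaining indices are filled in so that C stays a
  correlation matrix of the required kind: by 1 on the diagonal in the graph case, and by repeating a
  row and column with positive diagonal in the rank case, which does not increase the rank.\<close>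

lemma quadratic_form_eq: "x \<bullet> (A *v x) = (\<Sum>i\<in>UNIV. \<Sum>j\<in>UNIV. x$i * A$i$j * x$j)"
  by (simp add: inner_vec_def matrix_vector_mult_def sum_distrib_left mult.assoc)

lemma quadratic_form_supported:
  assumes "\<And>l. l \<notin> S \<Longrightarrow> x$l = 0"
  shows "x \<bullet> (A *v x) = (\<Sum>i\<in>S. \<Sum>j\<in>S. x$i * A$i$j * x$j)"
proof -
  have "(\<Sum>j\<in>UNIV. x$i * A$i$j * x$j) = (\<Sum>j\<in>S. x$i * A$i$j * x$j)" for i
    by (rule sum.mono_neutral_right) (auto simp: assms)
  then show ?thesis
    unfolding quadratic_form_eq by (simp, intro sum.mono_neutral_right) (auto simp: assms)
qed

lemma psd_symmetric: "psd A \<Longrightarrow> A$j$i = A$i$j"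
  unfolding psd_def by (metis transpose_def vec_lambda_beta)

lemma psd_quadratic_nonneg: "psd A \<Longrightarrow> 0 \<le> x \<bullet> (A *v x)"
  unfolding psd_def by blast

lemma psd_zero: "psd 0"
  by (simp add: psd_def vec_eq_iff transpose_def)

lemma psd_mat_1: "psd (mat 1)"
  by (simp add: psd_def)

lemma psd_add: "psd A \<Longrightarrow> psd B \<Longrightarrow> psd (A + B)"
  by (simp add: psd_def matrix_vector_mult_add_rdistrib inner_add_right transpose_def vec_eq_iff)

lemma psd_diag_nonneg: assumes "psd A" shows "0 \<le> A$i$i"
proof -
  have "0 \<le> axis i 1 \<bullet> (A *v axis i 1)" using assms by (rule psd_quadratic_nonneg)
  also have "axis i 1 \<bullet> (A *v axis i 1) = A$i$i"
    by (subst quadratic_form_supported[of "{i}"]) (auto simp: axis_def)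
  finally show ?thesis .
qed

lemma psd_diag_zero_imp_row_zero:
  assumes "psd A" and "A$i$i = 0" shows "A$i$j = 0"
proof (rule ccontr)
  assume nz: "A$i$j \<noteq> 0"
  with assms(2) have "i \<noteq> j" by auto
  define t where "t = - (A$j$j + 1) / (2 * A$i$j)"
  define x :: "real^'a" where "x = (\<chi> l. if l = i then t else if l = j then 1 else 0)"
  have "x \<bullet> (A *v x) = (\<Sum>a\<in>{i,j}. \<Sum>b\<in>{i,j}. x$a * A$a$b * x$b)"
    by (rule quadratic_form_supported) (simp add: x_def)
  also have "\<dots> = t * t * A$i$i + t * (A$i$j + A$j$i) + A$j$j"
    using \<open>i \<noteq> j\<close> by (simp add: x_def algebra_simps)
  also have "\<dots> = -1"
    using nz assms by (simp add: psd_symmetric[OF assms(1), of j i] t_def field_simps)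
  finally show False using psd_quadratic_nonneg[OF assms(1), of x] by simp
qed

definition rescale :: "('n::finite \<Rightarrow> 'n) \<Rightarrow> ('n \<Rightarrow> real) \<Rightarrow> real^'n^'n \<Rightarrow> real^'n^'n" where
  "rescale \<sigma> w A = (\<chi> i j. w i * A $ \<sigma> i $ \<sigma> j * w j)"

lemma rescale_eq_congruence:
  fixes \<sigma> :: "'n::finite \<Rightarrow> 'n" and w :: "'n \<Rightarrow> real"
  defines "S \<equiv> \<chi> k i. if k = \<sigma> i then w i else 0"
  shows "rescale \<sigma> w A = transpose S ** A ** S"
proof -
  have "(transpose S ** A) $ i $ l = w i * A $ \<sigma> i $ l" for i l
    by (simp add: S_def matrix_matrix_mult_def transpose_def mult_delta_left)
  then show ?thesis
    by (simp add: S_def rescale_def vec_eq_iff matrix_matrix_mult_def mult_delta_right)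
qed

lemma psd_congruence:
  assumes "psd A" shows "psd (transpose S ** A ** S)"
  unfolding psd_def
proof
  show "transpose (transpose S ** A ** S) = transpose S ** A ** S"
    using assms by (simp add: psd_def matrix_transpose_mul matrix_mul_assoc)
  show "\<forall>x. 0 \<le> x \<bullet> ((transpose S ** A ** S) *v x)"
    using psd_quadratic_nonneg[OF assms]
    by (metis dot_lmul_matrix matrix_vector_mul_assoc vector_transpose_matrix)
qed

lemma psd_rescale: "psd A \<Longrightarrow> psd (rescale \<sigma> w A)"
  by (simp add: rescale_eq_congruence psd_congruence)

lemma rank_rescale_le: "rank (rescale \<sigma> w A) \<le> rank A"
  unfolding rescale_eq_congruence
  by (meson order_trans rank_mul_le_left rank_mul_le_right)

lemma rescale_in_cone:
  assumes cone: "\<And>c x. 0 \<le> c \<Longrightarrow> x \<in> I \<Longrightarrow> c * x \<in> I"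
    and "\<And>i. 0 \<le> w i" and "\<And>i j. A$i$j \<in> I"
  shows "rescale \<sigma> w A $ i $ j \<in> I"
  using cone[of "w i * w j" "A $ \<sigma> i $ \<sigma> j"] assms(2,3) by (simp add: rescale_def mult_ac)

text \<open>Indices with zero diagonal are covered by the convention 0 powr \<alpha> = 0 in the weights.\<close>

lemma entrywise_eq_rescale_normalization:
  fixes f :: "real \<Rightarrow> real"
  assumes A: "psd A" and f0: "f 0 = 0"
    and hom: "\<And>c x. 0 < c \<Longrightarrow> x \<in> I \<Longrightarrow> f (c * x) = c powr \<alpha> * f x"
    and C_in: "\<And>i j. C$i$j \<in> I"
    and C_eq: "\<And>i j. 0 < A$i$i \<Longrightarrow> 0 < A$j$j \<Longrightarrow> C$i$j = A$i$j / (sqrt (A$i$i) * sqrt (A$j$j))"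
  shows "entrywise f A = rescale id (\<lambda>i. sqrt (A$i$i) powr \<alpha>) (entrywise f C)"
proof -
  have "f (A$i$j) = sqrt (A$i$i) powr \<alpha> * f (C$i$j) * sqrt (A$j$j) powr \<alpha>" for i j
  proof (cases "0 < A$i$i \<and> 0 < A$j$j")
    case True
    then have "A$i$j = (sqrt (A$i$i) * sqrt (A$j$j)) * C$i$j" by (simp add: C_eq)
    with True show ?thesis by (simp add: hom C_in powr_mult)
  next
    case False
    then have "A$i$i = 0 \<or> A$j$j = 0"
      using psd_diag_nonneg[OF A, of i] psd_diag_nonneg[OF A, of j] by linarith
    then have "A$i$j = 0"
      using psd_diag_zero_imp_row_zero[OF A] psd_symmetric[OF A] by metis
    with \<open>A$i$i = 0 \<or> A$j$j = 0\<close> show ?thesis by (auto simp: f0)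
  qed
  then show ?thesis by (simp add: vec_eq_iff entrywise_def rescale_def)
qed

lemma inverse_sqrt_normalizes: "0 < a \<Longrightarrow> inverse (sqrt a) * a * inverse (sqrt a) = 1"
  by (simp add: field_simps)

lemma psd_entrywise_Cnk_iff_Pnk:
  fixes f :: "real \<Rightarrow> real"
  assumes cone: "\<And>c x. 0 \<le> c \<Longrightarrow> x \<in> I \<Longrightarrow> c * x \<in> I" and f0: "f 0 = 0"
    and hom: "\<And>c x. 0 < c \<Longrightarrow> x \<in> I \<Longrightarrow> f (c * x) = c powr \<alpha> * f x"
  shows "(\<forall>A \<in> (Cnk k I :: (real^'n::finite^'n) set). psd (entrywise f A)) \<longleftrightarrow>
    (\<forall>A \<in> (Pnk k I :: (real^'n^'n) set). psd (entrywise f A))"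
proof (intro iffI ballI)
  fix A :: "real^'n^'n"
  assume corr: "\<forall>C \<in> (Cnk k I :: (real^'n^'n) set). psd (entrywise f C)" and "A \<in> Pnk k I"
  then have A: "psd A" and A_in: "\<And>i j. A$i$j \<in> I" and rank: "rank A \<le> k"
    by (auto simp: Pnk_def Pn_def)
  show "psd (entrywise f A)"
  proof (cases "\<exists>i. 0 < A$i$i")
    case True
    then obtain i0 where "0 < A$i0$i0" by blast
    define \<sigma> where "\<sigma> i = (if 0 < A$i$i then i else i0)" for i
    have pos: "0 < A $ \<sigma> i $ \<sigma> i" for i
      using \<open>0 < A$i0$i0\<close> by (simp add: \<sigma>_def)
    define C where "C = rescale \<sigma> (\<lambda>i. inverse (sqrt (A $ \<sigma> i $ \<sigma> i))) A"
    have w_nonneg: "0 \<le> inverse (sqrt (A $ \<sigma> i $ \<sigma> i))" for i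
      using pos[of i] by simp
    have C_in: "C$i$j \<in> I" for i j
      unfolding C_def by (rule rescale_in_cone[OF cone w_nonneg A_in])
    have "C$i$i = 1" for i
      using inverse_sqrt_normalizes[OF pos[of i]] by (simp add: C_def rescale_def)
    moreover have "rank C \<le> k"
      unfolding C_def using rank_rescale_le rank by (rule order_trans)
    ultimately have "C \<in> Cnk k I"
      using psd_rescale[OF A] C_in by (simp add: Cnk_def Pnk_def Pn_def is_corr_def C_def)
    with corr have "psd (entrywise f C)" by blast
    moreover have "entrywise f A = rescale id (\<lambda>i. sqrt (A$i$i) powr \<alpha>) (entrywise f C)"
      by (rule entrywise_eq_rescale_normalization[OF A f0 hom C_in])
        (auto simp: C_def rescale_def \<sigma>_def field_simps)
    ultimately show ?thesis by (simp add: psd_rescale)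
  next
    case False
    then have "A$i$i = 0" for i
      using psd_diag_nonneg[OF A, of i] by (meson not_less order_antisym)
    then have "entrywise f A = 0"
      using psd_diag_zero_imp_row_zero[OF A] by (simp add: vec_eq_iff entrywise_def f0)
    then show ?thesis by (simp add: psd_zero)
  qed
qed (auto simp: Cnk_def)

lemma entrywise_CG_iff_PG:
  fixes f :: "real \<Rightarrow> real" and G :: "'n::finite \<Rightarrow> 'n \<Rightarrow> bool"
  assumes cone: "\<And>c x. 0 \<le> c \<Longrightarrow> x \<in> I \<Longrightarrow> c * x \<in> I" and "1 \<in> I" and f0: "f 0 = 0"
    and hom: "\<And>c x. 0 < c \<Longrightarrow> x \<in> I \<Longrightarrow> f (c * x) = c powr \<alpha> * f x"
  shows "(\<forall>A \<in> CG G I. entrywise f A \<in> PG G UNIV) \<longleftrightarrow> (\<forall>A \<in> PG G I. entrywise f A \<in> PG G UNIV)"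
proof (intro iffI ballI)
  fix A :: "real^'n^'n"
  assume corr: "\<forall>C \<in> CG G I. entrywise f C \<in> PG G UNIV" and "A \<in> PG G I"
  then have A: "psd A" and A_in: "\<And>i j. A$i$j \<in> I"
    and pattern: "\<And>i j. i \<noteq> j \<Longrightarrow> \<not> G i j \<Longrightarrow> A$i$j = 0"
    by (auto simp: PG_def Pn_def)
  define w where "w i = inverse (sqrt (A$i$i))" for i
  \<comment> \<open>Since inverse 0 = 0, the first summand vanishes on indices with zero diagonal.\<close>
  define C where "C = rescale id w A + rescale id (\<lambda>i. of_bool (A$i$i = 0)) (mat 1)"
  have C_offdiag: "C$i$j = rescale id w A $ i $ j" if "i \<noteq> j" for i j
    using that by (simp add: C_def rescale_def mat_def)
  have C_diag: "C$i$i = 1" for i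
    using psd_diag_nonneg[OF A, of i] inverse_sqrt_normalizes[of "A$i$i"]
    by (cases "A$i$i = 0") (auto simp: C_def rescale_def w_def mat_def)
  have C_in: "C$i$j \<in> I" for i j
  proof (cases "i = j")
    case False
    have "0 \<le> w i" for i by (simp add: w_def psd_diag_nonneg[OF A])
    with False show ?thesis by (simp add: C_offdiag rescale_in_cone[OF cone _ A_in])
  qed (simp add: C_diag \<open>1 \<in> I\<close>)
  have "psd C"
    unfolding C_def by (intro psd_add psd_rescale A psd_mat_1)
  moreover have "C$i$j = 0" if "i \<noteq> j" "\<not> G i j" for i j
    using that by (simp add: C_offdiag rescale_def pattern)
  ultimately have "C \<in> CG G I"
    by (simp add: CG_def PG_def Pn_def is_corr_def C_diag C_in)
  with corr have "psd (entrywise f C)" by (simp add: PG_def Pn_def)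
  moreover have "entrywise f A = rescale id (\<lambda>i. sqrt (A$i$i) powr \<alpha>) (entrywise f C)"
    by (rule entrywise_eq_rescale_normalization[OF A f0 hom C_in])
      (auto simp: C_def rescale_def w_def mat_def field_simps)
  ultimately have "psd (entrywise f A)" by (simp add: psd_rescale)
  then show "entrywise f A \<in> PG G UNIV"
    by (simp add: PG_def Pn_def entrywise_def pattern f0)
qed (auto simp: CG_def)

lemma pow0_positive_homogeneous: "0 < c \<Longrightarrow> x \<in> {0..} \<Longrightarrow> pow0 \<alpha> (c * x) = c powr \<alpha> * pow0 \<alpha> x"
  by (auto simp: pow0_def powr_mult)

lemma phi_positive_homogeneous: "0 < c \<Longrightarrow> phi \<alpha> (c * x) = c powr \<alpha> * phi \<alpha> x"
  by (auto simp: phi_def abs_mult powr_mult)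

lemma psi_positive_homogeneous: "0 < c \<Longrightarrow> psi \<alpha> (c * x) = c powr \<alpha> * psi \<alpha> x"
  by (auto simp: psi_def abs_mult powr_mult sgn_mult)

theorem proposition4p15:
  fixes k :: nat and G :: "'n::finite \<Rightarrow> 'n \<Rightarrow> bool" and \<alpha> :: real
  assumes "1 \<le> k" and "k \<le> CARD('n)"
    and "\<And>i j. G i j \<Longrightarrow> G j i" and "\<And>i. \<not> G i i"
  shows
   "((\<forall>A \<in> (Cnk k {0..} :: (real^'n^'n) set). psd (entrywise (pow0 \<alpha>) A)) \<longleftrightarrow>
     (\<forall>A \<in> (Pnk k {0..} :: (real^'n^'n) set). psd (entrywise (pow0 \<alpha>) A)))
  \<and> ((\<forall>A \<in> CG G {0..}. entrywise (pow0 \<alpha>) A \<in> PG G UNIV) \<longleftrightarrow>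
     (\<forall>A \<in> PG G {0..}. entrywise (pow0 \<alpha>) A \<in> PG G UNIV))
  \<and> ((\<forall>A \<in> (Cnk k UNIV :: (real^'n^'n) set). psd (entrywise (phi \<alpha>) A)) \<longleftrightarrow>
     (\<forall>A \<in> (Pnk k UNIV :: (real^'n^'n) set). psd (entrywise (phi \<alpha>) A)))
  \<and> ((\<forall>A \<in> CG G UNIV. entrywise (phi \<alpha>) A \<in> PG G UNIV) \<longleftrightarrow>
     (\<forall>A \<in> PG G UNIV. entrywise (phi \<alpha>) A \<in> PG G UNIV))
  \<and> ((\<forall>A \<in> (Cnk k UNIV :: (real^'n^'n) set). psd (entrywise (psi \<alpha>) A)) \<longleftrightarrow>
     (\<forall>A \<in> (Pnk k UNIV :: (real^'n^'n) set). psd (entrywise (psi \<alpha>) A)))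
  \<and> ((\<forall>A \<in> CG G UNIV. entrywise (psi \<alpha>) A \<in> PG G UNIV) \<longleftrightarrow>
     (\<forall>A \<in> PG G UNIV. entrywise (psi \<alpha>) A \<in> PG G UNIV))"
proof -
  have cone_nonneg: "(0::real) \<le> c \<Longrightarrow> x \<in> {0..} \<Longrightarrow> c * x \<in> {0..}" for c x
    by simp
  have zero: "pow0 \<alpha> 0 = 0" "phi \<alpha> 0 = 0" "psi \<alpha> 0 = 0"
    by (simp_all add: pow0_def phi_def psi_def)
  show ?thesis
    by (intro conjI psd_entrywise_Cnk_iff_Pnk[where \<alpha> = \<alpha>] entrywise_CG_iff_PG[where \<alpha> = \<alpha>])
      (simp_all add: cone_nonneg zero pow0_positive_homogeneous
        phi_positive_homogeneous psi_positive_homogeneous)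
qed

end
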